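(* Let $A(z)=\sum_{k=0}^{\infty}a_kz^k$ with $a_0\neq 0$ and $H(z)=\sum_{k=1}^{\infty}h_kz^k$ with $h_1\neq 0$ be analytic in a disk $|z|<R$ with $R>1$, with real coefficients. Let the Sheffer polynomials $p_k$ be defined by $A(t)e^{xH(t)}=\sum_{k=0}^{\infty}p_k(x)t^k$ for $|t|<R$, and assume $p_k(x)\ge 0$ for all $x\ge 0$ and all $k$, $A(1)\neq 0$ and $H'(1)=1$. Let $(b_n)$ be a positive increasing sequence with $b_n\to\infty$ and $b_n/n\to 0$, and define $$T_n^*(f;x)=\frac{e^{-\frac{n}{b_n}xH(1)}}{A(1)}\sum_{k=0}^{\infty}p_k\Big(\frac{n}{b_n}x\Big)f\Big(\frac{k}{n}b_n\Big).$$ Let $\rho(x)=1+x^2$. Then there is a constant $M>0$, independent of $n$, such that $\|T_n^*(\rho;\cdot)\|_{\rho}\le 1+M$ for all $n$.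
   Context: For a function $g$ on $[0,\infty)$, $\|g\|_\rho=\sup_{x\ge 0}\frac{|g(x)|}{\rho(x)}$. *)

theory Defs
  imports "HOL-Analysis.Analysis"
begin

definition pser :: "(nat \<Rightarrow> real) \<Rightarrow> real \<Rightarrow> real" where
  "pser c t = (\<Sum>k. c k * t ^ k)"

definition rho :: "real \<Rightarrow> real" where
  "rho x = 1 + x ^ 2"

text \<open>Weighted norm ||g||_rho = sup over x >= 0 of |g x| / rho x (in the extended reals,
  so that an unbounded quotient gives infinity).\<close>
definition rho_norm :: "(real \<Rightarrow> real) \<Rightarrow> ereal" where
  "rho_norm g = (SUP x\<in>{0..}. ereal (\<bar>g x\<bar> / rho x))"

definition Tstar :: "(nat \<Rightarrow> real) \<Rightarrow> (nat \<Rightarrow> real) \<Rightarrow> (nat \<Rightarrow> real \<Rightarrow> real) \<Rightarrow> (nat \<Rightarrow> real)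
    \<Rightarrow> nat \<Rightarrow> (real \<Rightarrow> real) \<Rightarrow> real \<Rightarrow> real" where
  "Tstar a h p b n f x =
     exp (- (real n / b n) * x * pser h 1) / pser a 1 *
     (\<Sum>k. p k (real n / b n * x) * f (real k / real n * b n))"

end

theory Submission
  imports Defs
begin

text \<open>Put s = b_n / n and u = x / s. Then
  T_n^*(rho; x) = exp (-u H(1)) / A(1) * (SUM k. p_k(u) (1 + s^2 k^2)),
  so only the zeroth and second moments of the weights p_k(u) enter. Differentiating the
  generating function G(t) = A(t) exp (u H(t)) termwise at t = 1 gives SUM k. k p_k(u) = G'(1)
  and SUM k. k (k - 1) p_k(u) = G''(1); because H'(1) = 1, the u^2 term of G''(1) is exactly
  u^2 G(1). Hence T_n^*(rho; x) = 1 + x^2 + C1 s x + C0 s^2 with C0, C1 depending only on A and H.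
  Since b_n / n \<longlonglongrightarrow> 0, s is bounded, and x \<le> 1 + x^2 finishes the estimate.\<close>

lemma summable_of_complex_power_series:
  assumes "summable (\<lambda>k. complex_of_real (c k) * complex_of_real t ^ k)"
  shows "summable (\<lambda>k. c k * t ^ k)"
  using assms by (simp only: of_real_power[symmetric] of_real_mult[symmetric] summable_of_real_iff)

lemma summable_diffs_pser:
  fixes R :: real
  assumes "\<And>t. \<bar>t\<bar> < R \<Longrightarrow> summable (\<lambda>k. c k * t ^ k)" and "\<bar>t\<bar> < R"
  shows "summable (\<lambda>k. diffs c k * t ^ k)"
  using assms by (intro termdiff_converges[where K = R]) auto

lemma has_real_derivative_pser:
  fixes R :: real
  assumes "\<And>t. \<bar>t\<bar> < R \<Longrightarrow> summable (\<lambda>k. c k * t ^ k)" and "\<bar>t\<bar> < R"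
  shows "(pser c has_real_derivative pser (diffs c) t) (at t)"
  unfolding pser_def[abs_def] using assms by (intro termdiffs_strong'[where K = R]) auto

lemma has_real_derivative_mult_exp:
  assumes "(A has_real_derivative A') (at t)" and "(H has_real_derivative H') (at t)"
  shows "((\<lambda>s. A s * exp (u * H s)) has_real_derivative (A' + u * A t * H') * exp (u * H t)) (at t)"
  by (rule derivative_eq_intros assms refl | simp add: algebra_simps)+

lemma sums_of_nat_times:
  assumes "diffs c sums S"
  shows "(\<lambda>k. real k * c k) sums S"
proof -
  have "(\<lambda>k. real (Suc k) * c (Suc k)) sums S"
    using assms by (simp add: diffs_def)
  then show ?thesis by (subst (asm) sums_Suc_iff) simp
qed

lemma sums_of_nat_times_pred:
  assumes "diffs (diffs c) sums S"
  shows "(\<lambda>k. real k * (real k - 1) * c k) sums S"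
proof -
  have "(\<lambda>k. real k * diffs c k) sums S" using assms by (rule sums_of_nat_times)
  then have "(\<lambda>k. real (Suc k) * (real (Suc k) - 1) * c (Suc k)) sums S"
    by (simp add: diffs_def algebra_simps)
  then show ?thesis by (subst (asm) sums_Suc_iff) simp
qed

context
  fixes R u :: real and a h c :: "nat \<Rightarrow> real"
  assumes conv_a: "\<And>t. \<bar>t\<bar> < R \<Longrightarrow> summable (\<lambda>k. a k * t ^ k)"
    and conv_h: "\<And>t. \<bar>t\<bar> < R \<Longrightarrow> summable (\<lambda>k. h k * t ^ k)"
    and generating: "\<And>t. \<bar>t\<bar> < R \<Longrightarrow> (\<lambda>k. c k * t ^ k) sums (pser a t * exp (u * pser h t))"
begin

lemma diffs_sums_generating:
  assumes t: "\<bar>t\<bar> < R"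
  shows "(\<lambda>k. diffs c k * t ^ k) sums ((pser (diffs a) t + u * pser a t * pser (diffs h) t) * exp (u * pser h t))"
proof -
  have "((\<lambda>s. pser a s * exp (u * pser h s)) has_real_derivative
      (pser (diffs a) t + u * pser a t * pser (diffs h) t) * exp (u * pser h t)) (at t)"
    using t by (intro has_real_derivative_mult_exp has_real_derivative_pser conv_a conv_h)
  then show ?thesis
    by (rule termdiffs_sums_strong[where K = R, rotated]) (use generating t in auto)
qed

lemma diffs_diffs_sums_generating:
  assumes t: "\<bar>t\<bar> < R"
  shows "(\<lambda>k. diffs (diffs c) k * t ^ k) sums
    ((pser (diffs (diffs a)) t + 2 * u * pser (diffs a) t * pser (diffs h) t
      + u * pser a t * pser (diffs (diffs h)) t + u\<^sup>2 * pser a t * (pser (diffs h) t)\<^sup>2)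
    * exp (u * pser h t))"
proof -
  have dA: "(pser a has_real_derivative pser (diffs a) t) (at t)"
    and dH: "(pser h has_real_derivative pser (diffs h) t) (at t)"
    and dA': "(pser (diffs a) has_real_derivative pser (diffs (diffs a)) t) (at t)"
    and dH': "(pser (diffs h) has_real_derivative pser (diffs (diffs h)) t) (at t)"
    using t by (auto intro!: has_real_derivative_pser summable_diffs_pser conv_a conv_h)
  have "((\<lambda>s. pser (diffs a) s + u * pser a s * pser (diffs h) s) has_real_derivative
      pser (diffs (diffs a)) t + u * (pser (diffs a) t * pser (diffs h) t + pser a t * pser (diffs (diffs h)) t))
      (at t)"
    by (rule derivative_eq_intros dA dH dA' dH' refl | simp add: algebra_simps)+
  from has_real_derivative_mult_exp[where u = u, OF this dH]
  have "((\<lambda>s. (pser (diffs a) s + u * pser a s * pser (diffs h) s) * exp (u * pser h s))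
      has_real_derivative
      (pser (diffs (diffs a)) t + 2 * u * pser (diffs a) t * pser (diffs h) t
        + u * pser a t * pser (diffs (diffs h)) t + u\<^sup>2 * pser a t * (pser (diffs h) t)\<^sup>2)
      * exp (u * pser h t)) (at t)"
    by (simp add: algebra_simps power2_eq_square)
  then show ?thesis
    by (rule termdiffs_sums_strong[where K = R, rotated]) (use diffs_sums_generating t in auto)
qed

lemma sheffer_moments_at_one:
  assumes R: "R > 1" and H'1: "pser (diffs h) 1 = 1"
  shows "c sums (pser a 1 * exp (u * pser h 1))"
    and "(\<lambda>k. real k ^ 2 * c k) sums
      ((pser (diffs (diffs a)) 1 + pser (diffs a) 1
        + u * (2 * pser (diffs a) 1 + pser a 1 + pser a 1 * pser (diffs (diffs h)) 1)
        + u\<^sup>2 * pser a 1) * exp (u * pser h 1))"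
proof -
  have one: "\<bar>1::real\<bar> < R" using R by simp
  show "c sums (pser a 1 * exp (u * pser h 1))"
    using generating[OF one] by simp
  have "(\<lambda>k. real k * c k) sums ((pser (diffs a) 1 + u * pser a 1) * exp (u * pser h 1))"
    using diffs_sums_generating[OF one] H'1 by (intro sums_of_nat_times) simp
  moreover have "(\<lambda>k. real k * (real k - 1) * c k) sums
      ((pser (diffs (diffs a)) 1 + 2 * u * pser (diffs a) 1 + u * pser a 1 * pser (diffs (diffs h)) 1
        + u\<^sup>2 * pser a 1) * exp (u * pser h 1))"
    using diffs_diffs_sums_generating[OF one] H'1 by (intro sums_of_nat_times_pred) simp
  ultimately have "(\<lambda>k. real k * (real k - 1) * c k + real k * c k) sums
      ((pser (diffs (diffs a)) 1 + 2 * u * pser (diffs a) 1 + u * pser a 1 * pser (diffs (diffs h)) 1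
        + u\<^sup>2 * pser a 1) * exp (u * pser h 1)
       + (pser (diffs a) 1 + u * pser a 1) * exp (u * pser h 1))"
    by (intro sums_add)
  then show "(\<lambda>k. real k ^ 2 * c k) sums
      ((pser (diffs (diffs a)) 1 + pser (diffs a) 1
        + u * (2 * pser (diffs a) 1 + pser a 1 + pser a 1 * pser (diffs (diffs h)) 1)
        + u\<^sup>2 * pser a 1) * exp (u * pser h 1))"
    by (simp add: algebra_simps power2_eq_square)
qed

end

lemma Tstar_rho_eq:
  fixes R :: real
  assumes conv_a: "\<And>t. \<bar>t\<bar> < R \<Longrightarrow> summable (\<lambda>k. a k * t ^ k)"
    and conv_h: "\<And>t. \<bar>t\<bar> < R \<Longrightarrow> summable (\<lambda>k. h k * t ^ k)"
    and sheffer: "\<And>x t. \<bar>t\<bar> < R \<Longrightarrow> (\<lambda>k. p k x * t ^ k) sums (pser a t * exp (x * pser h t))"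
    and R: "R > 1" and H'1: "pser (diffs h) 1 = 1" and A1: "pser a 1 \<noteq> 0"
    and n: "n > 0" and b: "b n > 0"
  shows "Tstar a h p b n rho x = 1 + x\<^sup>2
    + b n / n * x * (2 * pser (diffs a) 1 / pser a 1 + 1 + pser (diffs (diffs h)) 1)
    + (b n / n)\<^sup>2 * ((pser (diffs (diffs a)) 1 + pser (diffs a) 1) / pser a 1)"
proof -
  define s where "s = b n / n"
  define u where "u = real n / b n * x"
  define E where "E = exp (u * pser h 1)"
  define Q where "Q = pser (diffs (diffs a)) 1 + pser (diffs a) 1
    + u * (2 * pser (diffs a) 1 + pser a 1 + pser a 1 * pser (diffs (diffs h)) 1) + u\<^sup>2 * pser a 1"
  have s: "s > 0" and x: "x = s * u" using n b by (simp_all add: s_def u_def)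
  note moments = sheffer_moments_at_one[where c = "\<lambda>k. p k u", OF conv_a conv_h sheffer R H'1]
  have "(\<lambda>k. p k u * rho (real k / real n * b n)) = (\<lambda>k. p k u + s\<^sup>2 * (real k ^ 2 * p k u))"
    by (simp add: s_def rho_def algebra_simps power2_eq_square)
  moreover have "(\<lambda>k. p k u + s\<^sup>2 * (real k ^ 2 * p k u)) sums (pser a 1 * E + s\<^sup>2 * (Q * E))"
    unfolding E_def Q_def by (intro sums_add sums_mult moments)
  ultimately have sum: "(\<Sum>k. p k u * rho (real k / real n * b n)) = (pser a 1 + s\<^sup>2 * Q) * E"
    by (simp add: sums_iff algebra_simps)
  have "Tstar a h p b n rho x = exp (- (u * pser h 1)) * E / pser a 1 * (pser a 1 + s\<^sup>2 * Q)"
    unfolding Tstar_def u_def[symmetric] sum by (simp add: u_def)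
  also have "\<dots> = 1 + s\<^sup>2 * Q / pser a 1"
    using A1 by (simp add: E_def exp_minus field_simps)
  finally show ?thesis
    using A1 s unfolding Q_def s_def[symmetric] x by (simp add: field_simps power2_eq_square)
qed

lemma rho_norm_le:
  assumes "\<And>x. x \<ge> 0 \<Longrightarrow> \<bar>g x\<bar> \<le> K * rho x"
  shows "rho_norm g \<le> ereal K"
proof -
  have "rho x > 0" for x
    by (simp add: rho_def add_pos_nonneg)
  then show ?thesis
    unfolding rho_norm_def using assms by (auto intro!: SUP_least simp: divide_le_eq)
qed

lemma abs_quadratic_le_rho:
  fixes s x B C0 C1 :: real
  assumes "0 \<le> s" "s \<le> B" "0 \<le> x"
  shows "\<bar>1 + x\<^sup>2 + s * x * C1 + s\<^sup>2 * C0\<bar> \<le> (1 + B * \<bar>C1\<bar> + B\<^sup>2 * \<bar>C0\<bar>) * rho x"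
proof -
  have "x \<le> 1 + x\<^sup>2"
    using zero_le_power2[of "x - 1"] assms(3) by (simp add: power2_diff)
  then have "s * x \<le> B * (1 + x\<^sup>2)"
    using assms by (intro mult_mono) auto
  then have "s * x * \<bar>C1\<bar> \<le> B * (1 + x\<^sup>2) * \<bar>C1\<bar>"
    by (rule mult_right_mono) simp
  then have "\<bar>s * x * C1\<bar> \<le> B * \<bar>C1\<bar> * (1 + x\<^sup>2)"
    using assms by (simp add: abs_mult ac_simps)
  moreover have "s\<^sup>2 \<le> B\<^sup>2 * (1 + x\<^sup>2)"
    using power_mono[OF assms(2,1), of 2] by (simp add: distrib_left add_increasing2)
  then have "s\<^sup>2 * \<bar>C0\<bar> \<le> B\<^sup>2 * (1 + x\<^sup>2) * \<bar>C0\<bar>"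
    by (rule mult_right_mono) simp
  then have "\<bar>s\<^sup>2 * C0\<bar> \<le> B\<^sup>2 * \<bar>C0\<bar> * (1 + x\<^sup>2)"
    by (simp add: abs_mult ac_simps)
  moreover have "\<bar>1 + x\<^sup>2 + s * x * C1 + s\<^sup>2 * C0\<bar> \<le> (1 + x\<^sup>2) + \<bar>s * x * C1\<bar> + \<bar>s\<^sup>2 * C0\<bar>"
    using abs_triangle_ineq[of "1 + x\<^sup>2 + s * x * C1" "s\<^sup>2 * C0"] abs_triangle_ineq[of "1 + x\<^sup>2" "s * x * C1"]
    by simp
  ultimately show ?thesis
    unfolding rho_def distrib_right mult_1 by linarith
qed

theorem lemma3p3:
  fixes a h :: "nat \<Rightarrow> real" and p :: "nat \<Rightarrow> real \<Rightarrow> real"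
    and b :: "nat \<Rightarrow> real" and R :: real
  assumes R: "R > 1"
    and A_conv: "\<forall>z::complex. norm z < R \<longrightarrow> summable (\<lambda>k. complex_of_real (a k) * z ^ k)"
    and H_conv: "\<forall>z::complex. norm z < R \<longrightarrow> summable (\<lambda>k. complex_of_real (h k) * z ^ k)"
    and a0: "a 0 \<noteq> 0"
    and h0: "h 0 = 0"
    and h1: "h 1 \<noteq> 0"
    and sheffer: "\<forall>x t. \<bar>t\<bar> < R \<longrightarrow> (\<lambda>k. p k x * t ^ k) sums (pser a t * exp (x * pser h t))"
    and p_nonneg: "\<forall>k x. x \<ge> 0 \<longrightarrow> p k x \<ge> 0"
    and A1: "pser a 1 \<noteq> 0"
    and H'1: "(pser h has_real_derivative 1) (at 1)"
    and b_pos: "\<forall>n. b n > 0"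
    and b_inc: "incseq b"
    and b_inf: "filterlim b at_top sequentially"
    and b_sub: "(\<lambda>n. b n / real n) \<longlonglongrightarrow> 0"
  shows "\<exists>M>0. \<forall>n\<ge>1. rho_norm (Tstar a h p b n rho) \<le> ereal (1 + M)"
proof -
  have conv_a: "summable (\<lambda>k. a k * t ^ k)" and conv_h: "summable (\<lambda>k. h k * t ^ k)"
    if "\<bar>t\<bar> < R" for t
    using A_conv H_conv that by (auto intro: summable_of_complex_power_series)
  have "pser (diffs h) 1 = 1"
    using R by (intro DERIV_unique[OF has_real_derivative_pser H'1] conv_h) auto
  note T_eq = Tstar_rho_eq[OF conv_a conv_h _ R this A1]
  have "Bseq (\<lambda>n. b n / real n)"
    using b_sub by (intro convergent_imp_Bseq convergentI)
  then obtain B where B: "B > 0" "\<And>n. norm (b n / real n) \<le> B"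
    by (auto elim: BseqE)
  define C1 where "C1 = 2 * pser (diffs a) 1 / pser a 1 + 1 + pser (diffs (diffs h)) 1"
  define C0 where "C0 = (pser (diffs (diffs a)) 1 + pser (diffs a) 1) / pser a 1"
  define M where "M = B * (1 + \<bar>C1\<bar>) + B\<^sup>2 * \<bar>C0\<bar>"
  have "\<bar>Tstar a h p b n rho x\<bar> \<le> (1 + M) * rho x" if n: "n \<ge> 1" and x: "x \<ge> 0" for n x
  proof -
    have s: "0 \<le> b n / real n" "b n / real n \<le> B"
      using B(2)[of n] b_pos[rule_format, of n] by auto
    have "Tstar a h p b n rho x = 1 + x\<^sup>2 + b n / n * x * C1 + (b n / n)\<^sup>2 * C0"
      unfolding C0_def C1_def using n b_pos sheffer by (intro T_eq) auto
    then have "\<bar>Tstar a h p b n rho x\<bar> \<le> (1 + B * \<bar>C1\<bar> + B\<^sup>2 * \<bar>C0\<bar>) * rho x"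
      using s x by (simp only: abs_quadratic_le_rho)
    also have "\<dots> \<le> (1 + M) * rho x"
      using B(1) by (intro mult_right_mono) (simp_all add: M_def rho_def algebra_simps)
    finally show ?thesis .
  qed
  moreover have "M > 0"
    using B(1) by (simp add: M_def add_pos_nonneg)
  ultimately show ?thesis
    by (blast intro: rho_norm_le)
qed

end
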